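(* Let $(H,B_1,B_2)$ be a Rota-Baxter system of Hopf algebras with descendent Hopf algebra $H_{B_1,B_2}$, let $A$ be a unital commutative algebra, and let $\mathcal{B}_1,\mathcal{B}_2:\mathrm{Char}(H,A)\to\mathrm{Char}(H_{B_1,B_2},A)$ be given by $\mathcal{B}_i(f)(a)=f(B_i(a))$, $a\in H_1$. Then $\mathcal{B}_1(\ker\mathcal{B}_2)$ is a normal subgroup of $\operatorname{Im}(\mathcal{B}_1)$ and $\mathcal{B}_2(\ker\mathcal{B}_1)$ is a normal subgroup of $\operatorname{Im}(\mathcal{B}_2)$.
   Context: $\mathbb{F}$ is a field of characteristic $0$; Sweedler notation $\Delta(a)=a_1\otimes a_2$. A Rota-Baxter system of Hopf algebras is a triple $(H,B_1,B_2)$ with $(H,\cdot,1,\Delta,\epsilon,S)$ a cocommutative Hopf algebra, $B_1,B_2$ coalgebra homomorphisms with $B_1(1)=B_2(1)=1$, and for all $a,b\in H$: $B_1(a)B_1(b)=B_1(B_1(a_1)bS(B_2(a_2)))$, $B_2(a)B_2(b)=B_2(B_1(a_1)bS(B_2(a_2)))$. Descendent operation $a\circ b=B_1(a_1)bS(B_2(a_2))$, cocycle $\sigma(a)=B_1(a_1)S(B_2(a_2))$, $H_1=\operatorname{Im}(\sigma)$; $H_{B_1,B_2}$ is the Hopf algebra $H_1$ with product $\circ$, unit $1$, restricted $\Delta,\epsilon$, antipode $T(a)=S(B_1(a_1))B_2(a_2)$. Convolution: $(f\ast g)(a)=f(a_1)g(a_2)$. $\mathrm{Char}(H,A)$ is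 the group under $\ast$ of algebra homomorphisms $H\to A$; $\mathrm{Char}(H_{B_1,B_2},A)$ is the group under convolution (w.r.t. the coproduct of $H_1$) of algebra homomorphisms $(H_1,\circ,1)\to A$. *)

theory Defs
  imports Main "HOL.Vector_Spaces" "HOL-Algebra.Coset"
begin

text \<open>
Since Isabelle/HOL has no tensor products,
an element of H (x) H is represented by a finite list of pairs (u,v), standing for the
sum of the u (x) v; two such lists represent the same tensor iff every 'k-valued
bilinear form takes the same value on them (this characterises equality in H (x) H over
a field).  Similarly for H (x) H (x) H with trilinear forms.  The coproduct is a map
Delta from H to such lists, and Sweedler sums f(a_1,a_2) are sums over the list Delta a.
\<close>

definition bilinear_form :: "('k::field \<Rightarrow> 'h::ab_group_add \<Rightarrow> 'h) \<Rightarrow> ('h \<Rightarrow> 'h \<Rightarrow> 'k) \<Rightarrow> bool" where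
  "bilinear_form sc \<beta> \<longleftrightarrow>
     (\<forall>x. Vector_Spaces.linear sc (*) (\<beta> x)) \<and> (\<forall>y. Vector_Spaces.linear sc (*) (\<lambda>x. \<beta> x y))"

definition trilinear_form :: "('k::field \<Rightarrow> 'h::ab_group_add \<Rightarrow> 'h) \<Rightarrow> ('h \<Rightarrow> 'h \<Rightarrow> 'h \<Rightarrow> 'k) \<Rightarrow> bool" where
  "trilinear_form sc \<tau> \<longleftrightarrow>
     (\<forall>x y. Vector_Spaces.linear sc (*) (\<tau> x y)) \<and> (\<forall>x z. Vector_Spaces.linear sc (*) (\<lambda>y. \<tau> x y z))
     \<and> (\<forall>y z. Vector_Spaces.linear sc (*) (\<lambda>x. \<tau> x y z))"

definition tensor2_eq :: "('k::field \<Rightarrow> 'h::ab_group_add \<Rightarrow> 'h) \<Rightarrow> ('h \<times> 'h) list \<Rightarrow> ('h \<times> 'h) list \<Rightarrow> bool" where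
  "tensor2_eq sc xs ys \<longleftrightarrow>
     (\<forall>\<beta>. bilinear_form sc \<beta> \<longrightarrow> sum_list (map (\<lambda>(u,v). \<beta> u v) xs) = sum_list (map (\<lambda>(u,v). \<beta> u v) ys))"

definition tensor3_eq :: "('k::field \<Rightarrow> 'h::ab_group_add \<Rightarrow> 'h) \<Rightarrow> ('h \<times> 'h \<times> 'h) list \<Rightarrow> ('h \<times> 'h \<times> 'h) list \<Rightarrow> bool" where
  "tensor3_eq sc xs ys \<longleftrightarrow>
     (\<forall>\<tau>. trilinear_form sc \<tau> \<longrightarrow> sum_list (map (\<lambda>(u,v,w). \<tau> u v w) xs) = sum_list (map (\<lambda>(u,v,w). \<tau> u v w) ys))"

definition is_algebra :: "('k::field \<Rightarrow> 'h::ring_1 \<Rightarrow> 'h) \<Rightarrow> bool" where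
  "is_algebra sc \<longleftrightarrow> vector_space sc \<and>
     (\<forall>c x y. sc c (x * y) = sc c x * y \<and> sc c (x * y) = x * sc c y)"

definition cocomm_hopf_algebra ::
  "('k::field_char_0 \<Rightarrow> 'h::ring_1 \<Rightarrow> 'h) \<Rightarrow> ('h \<Rightarrow> ('h \<times> 'h) list) \<Rightarrow> ('h \<Rightarrow> 'k) \<Rightarrow> ('h \<Rightarrow> 'h) \<Rightarrow> bool" where
  "cocomm_hopf_algebra sc \<Delta> \<epsilon> S \<longleftrightarrow>
     is_algebra sc
   \<comment> \<open>coproduct is linear\<close>
   \<and> (\<forall>x y. tensor2_eq sc (\<Delta> (x + y)) (\<Delta> x @ \<Delta> y))
   \<and> (\<forall>c x. tensor2_eq sc (\<Delta> (sc c x)) (map (\<lambda>(u,v). (sc c u, v)) (\<Delta> x)))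
   \<comment> \<open>coassociativity\<close>
   \<and> (\<forall>x. tensor3_eq sc
          (concat (map (\<lambda>(u,v). map (\<lambda>(u1,u2). (u1,u2,v)) (\<Delta> u)) (\<Delta> x)))
          (concat (map (\<lambda>(u,v). map (\<lambda>(v1,v2). (u,v1,v2)) (\<Delta> v)) (\<Delta> x))))
   \<comment> \<open>counit\<close>
   \<and> Vector_Spaces.linear sc (*) \<epsilon>
   \<and> (\<forall>x. sum_list (map (\<lambda>(u,v). sc (\<epsilon> u) v) (\<Delta> x)) = x)
   \<and> (\<forall>x. sum_list (map (\<lambda>(u,v). sc (\<epsilon> v) u) (\<Delta> x)) = x)
   \<comment> \<open>bialgebra compatibility\<close>
   \<and> (\<forall>x y. tensor2_eq sc (\<Delta> (x * y))
            (concat (map (\<lambda>(u,v). map (\<lambda>(u',v'). (u * u', v * v')) (\<Delta> y)) (\<Delta> x))))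
   \<and> tensor2_eq sc (\<Delta> 1) [(1,1)]
   \<and> (\<forall>x y. \<epsilon> (x * y) = \<epsilon> x * \<epsilon> y) \<and> \<epsilon> 1 = 1
   \<comment> \<open>antipode\<close>
   \<and> Vector_Spaces.linear sc sc S
   \<and> (\<forall>x. sum_list (map (\<lambda>(u,v). S u * v) (\<Delta> x)) = sc (\<epsilon> x) 1)
   \<and> (\<forall>x. sum_list (map (\<lambda>(u,v). u * S v) (\<Delta> x)) = sc (\<epsilon> x) 1)
   \<comment> \<open>cocommutativity\<close>
   \<and> (\<forall>x. tensor2_eq sc (\<Delta> x) (map prod.swap (\<Delta> x)))"

definition coalgebra_hom ::
  "('k::field \<Rightarrow> 'h::ring_1 \<Rightarrow> 'h) \<Rightarrow> ('h \<Rightarrow> ('h \<times> 'h) list) \<Rightarrow> ('h \<Rightarrow> 'k) \<Rightarrow> ('h \<Rightarrow> 'h) \<Rightarrow> bool" where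
  "coalgebra_hom sc \<Delta> \<epsilon> B \<longleftrightarrow>
     Vector_Spaces.linear sc sc B
   \<and> (\<forall>x. tensor2_eq sc (\<Delta> (B x)) (map (\<lambda>(u,v). (B u, B v)) (\<Delta> x)))
   \<and> (\<forall>x. \<epsilon> (B x) = \<epsilon> x)"

definition desc_op :: "('h \<Rightarrow> ('h \<times> 'h) list) \<Rightarrow> ('h \<Rightarrow> 'h) \<Rightarrow> ('h \<Rightarrow> 'h) \<Rightarrow> ('h \<Rightarrow> 'h) \<Rightarrow> 'h::ring_1 \<Rightarrow> 'h \<Rightarrow> 'h" where
  "desc_op \<Delta> S B1 B2 a b = sum_list (map (\<lambda>(u,v). B1 u * b * S (B2 v)) (\<Delta> a))"

definition cocycle :: "('h \<Rightarrow> ('h \<times> 'h) list) \<Rightarrow> ('h \<Rightarrow> 'h) \<Rightarrow> ('h \<Rightarrow> 'h) \<Rightarrow> ('h \<Rightarrow> 'h) \<Rightarrow> 'h::ring_1 \<Rightarrow> 'h" where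
  "cocycle \<Delta> S B1 B2 a = sum_list (map (\<lambda>(u,v). B1 u * S (B2 v)) (\<Delta> a))"

definition H1 :: "('h \<Rightarrow> ('h \<times> 'h) list) \<Rightarrow> ('h \<Rightarrow> 'h) \<Rightarrow> ('h \<Rightarrow> 'h) \<Rightarrow> ('h \<Rightarrow> 'h) \<Rightarrow> 'h::ring_1 set" where
  "H1 \<Delta> S B1 B2 = range (cocycle \<Delta> S B1 B2)"

definition rota_baxter_system ::
  "('k::field_char_0 \<Rightarrow> 'h::ring_1 \<Rightarrow> 'h) \<Rightarrow> ('h \<Rightarrow> ('h \<times> 'h) list) \<Rightarrow> ('h \<Rightarrow> 'k) \<Rightarrow> ('h \<Rightarrow> 'h)
    \<Rightarrow> ('h \<Rightarrow> 'h) \<Rightarrow> ('h \<Rightarrow> 'h) \<Rightarrow> bool" where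
  "rota_baxter_system sc \<Delta> \<epsilon> S B1 B2 \<longleftrightarrow>
     cocomm_hopf_algebra sc \<Delta> \<epsilon> S
   \<and> coalgebra_hom sc \<Delta> \<epsilon> B1 \<and> coalgebra_hom sc \<Delta> \<epsilon> B2
   \<and> B1 1 = 1 \<and> B2 1 = 1
   \<and> (\<forall>a b. B1 a * B1 b = B1 (desc_op \<Delta> S B1 B2 a b))
   \<and> (\<forall>a b. B2 a * B2 b = B2 (desc_op \<Delta> S B1 B2 a b))"

definition comm_algebra :: "('k::field \<Rightarrow> 'a::comm_ring_1 \<Rightarrow> 'a) \<Rightarrow> bool" where
  "comm_algebra scA \<longleftrightarrow> vector_space scA \<and> (\<forall>c x y. scA c (x * y) = scA c x * y)"

definition Char_H ::
  "('k::field \<Rightarrow> 'h::ring_1 \<Rightarrow> 'h) \<Rightarrow> ('h \<Rightarrow> ('h \<times> 'h) list) \<Rightarrow> ('h \<Rightarrow> 'k)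
    \<Rightarrow> ('k \<Rightarrow> 'a::comm_ring_1 \<Rightarrow> 'a) \<Rightarrow> ('h \<Rightarrow> 'a) monoid" where
  "Char_H sc \<Delta> \<epsilon> scA =
     \<lparr> carrier = {f. Vector_Spaces.linear sc scA f \<and> f 1 = 1 \<and> (\<forall>x y. f (x * y) = f x * f y)},
       mult = (\<lambda>f g x. sum_list (map (\<lambda>(u,v). f u * g v) (\<Delta> x))),
       one = (\<lambda>x. scA (\<epsilon> x) 1) \<rparr>"

text \<open>The group Char(H_{B1,B2},A): algebra homomorphisms (H1, o, 1) -> A, represented as
  functions that are extensional on H1 (value undefined outside H1).  The convolution uses
  the coproduct of H1: for a in H1 a representation of Delta a by pairs from H1 x H1.\<close>
definition Char_desc ::
  "('k::field_char_0 \<Rightarrow> 'h::ring_1 \<Rightarrow> 'h) \<Rightarrow> ('h \<Rightarrow> ('h \<times> 'h) list) \<Rightarrow> ('h \<Rightarrow> 'k) \<Rightarrow> ('h \<Rightarrow> 'h)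
    \<Rightarrow> ('h \<Rightarrow> 'h) \<Rightarrow> ('h \<Rightarrow> 'h) \<Rightarrow> ('k \<Rightarrow> 'a::comm_ring_1 \<Rightarrow> 'a) \<Rightarrow> ('h \<Rightarrow> 'a) monoid" where
  "Char_desc sc \<Delta> \<epsilon> S B1 B2 scA =
     (let K = H1 \<Delta> S B1 B2 in
     \<lparr> carrier = {f. f \<in> extensional K
                    \<and> (\<forall>x\<in>K. \<forall>y\<in>K. f (x + y) = f x + f y)
                    \<and> (\<forall>c. \<forall>x\<in>K. f (sc c x) = scA c (f x))
                    \<and> f 1 = 1
                    \<and> (\<forall>x\<in>K. \<forall>y\<in>K. f (desc_op \<Delta> S B1 B2 x y) = f x * f y)},
       mult = (\<lambda>f g. restrict (\<lambda>x. sum_list (map (\<lambda>(u,v). f u * g v)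
                         (SOME xs. set xs \<subseteq> K \<times> K \<and> tensor2_eq sc (\<Delta> x) xs))) K),
       one = restrict (\<lambda>x. scA (\<epsilon> x) 1) K \<rparr>)"

definition char_map :: "('h \<Rightarrow> 'h) \<Rightarrow> 'h set \<Rightarrow> ('h \<Rightarrow> 'a) \<Rightarrow> ('h \<Rightarrow> 'a)" where
  "char_map B K f = restrict (\<lambda>a. f (B a)) K"

end

theory Submission
  imports Defs
begin

(*
  The maps \<B>_i are unital and multiplicative from the group Char(H,A) into the
  convolution monoid of H_1: each element \<sigma>(a) of H_1 has coproduct \<sigma>(a_1) \<otimes> \<sigma>(a_2)
  (by cocommutativity, \<Delta>(S x) = S x_1 \<otimes> S x_2 and \<Delta> \<circ> B_i = (B_i \<otimes> B_i) \<circ> \<Delta>),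
  so convolution on H_1 computes f(B_i(a)_1) g(B_i(a)_2).

  Without tensor products, an identity in H \<otimes> H is an identity of Sweedler sums
  \<Sum> \<beta>(x_1, x_2) over all bilinear \<beta>.  As linear functionals separate the points of a
  vector space, the scalar-valued forms in the definition of tensor2_eq give such
  identities for bilinear maps into any vector space.
*)

lemma group_hom_onto_image:
  fixes G :: "('a, 'm) monoid_scheme" and G' :: "('b, 'n) monoid_scheme"
  assumes G: "group G"
    and mult: "\<And>x y. x \<in> carrier G \<Longrightarrow> y \<in> carrier G \<Longrightarrow> \<phi> (x \<otimes>\<^bsub>G\<^esub> y) = \<phi> x \<otimes>\<^bsub>G'\<^esub> \<phi> y"
    and one: "\<phi> \<one>\<^bsub>G\<^esub> = \<one>\<^bsub>G'\<^esub>"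
  shows "group_hom G (G'\<lparr>carrier := \<phi> ` carrier G\<rparr>) \<phi>"
proof -
  interpret G: group G by (rule G)
  have "group (G'\<lparr>carrier := \<phi> ` carrier G\<rparr>)"
  proof (rule groupI; simp)
    show "\<one>\<^bsub>G'\<^esub> \<in> \<phi> ` carrier G"
      using one G.one_closed by (metis image_eqI)
  next
    fix x assume "x \<in> \<phi> ` carrier G"
    then obtain a where a: "a \<in> carrier G" "x = \<phi> a" by auto
    then have "\<phi> (inv\<^bsub>G\<^esub> a) \<otimes>\<^bsub>G'\<^esub> x = \<one>\<^bsub>G'\<^esub>"
      by (simp flip: mult one)
    then show "\<exists>y\<in>carrier G. \<phi> y \<otimes>\<^bsub>G'\<^esub> x = \<one>\<^bsub>G'\<^esub>"
      using a G.inv_closed by blast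
  qed (auto simp flip: mult one simp: G.m_assoc)
  then show ?thesis
    using G by (auto simp: group_hom_def group_hom_axioms_def hom_def mult)
qed

lemma normal_image_of_kernel:
  fixes G :: "('a, 'm) monoid_scheme" and G' :: "('b, 'n) monoid_scheme"
  assumes G: "group G"
    and mult1: "\<And>x y. x \<in> carrier G \<Longrightarrow> y \<in> carrier G \<Longrightarrow> \<phi>1 (x \<otimes>\<^bsub>G\<^esub> y) = \<phi>1 x \<otimes>\<^bsub>G'\<^esub> \<phi>1 y"
    and one1: "\<phi>1 \<one>\<^bsub>G\<^esub> = \<one>\<^bsub>G'\<^esub>"
    and mult2: "\<And>x y. x \<in> carrier G \<Longrightarrow> y \<in> carrier G \<Longrightarrow> \<phi>2 (x \<otimes>\<^bsub>G\<^esub> y) = \<phi>2 x \<otimes>\<^bsub>G'\<^esub> \<phi>2 y"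
    and one2: "\<phi>2 \<one>\<^bsub>G\<^esub> = \<one>\<^bsub>G'\<^esub>"
  shows "\<phi>1 ` kernel G G' \<phi>2 \<lhd> G'\<lparr>carrier := \<phi>1 ` carrier G\<rparr>"
proof -
  have "kernel G G' \<phi>2 \<lhd> G"
    using group_hom.normal_kernel[OF group_hom_onto_image[OF G mult2 one2]]
    by (simp add: kernel_def)
  then show ?thesis
    using normal.surj_hom_normal_subgroup[OF _ group_hom_onto_image[OF G mult1 one1]] by simp
qed

section \<open>Multilinear maps and Sweedler sums\<close>

(* Unlike Vector_Spaces.linear, this carries no vector space axioms, so linearity goals
   can be closed by introduction rules alone. *)
definition lin_map ::
    "('k::field \<Rightarrow> 'a::ab_group_add \<Rightarrow> 'a) \<Rightarrow> ('k \<Rightarrow> 'b::ab_group_add \<Rightarrow> 'b) \<Rightarrow> ('a \<Rightarrow> 'b) \<Rightarrow> bool"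
where
  "lin_map s1 s2 f \<longleftrightarrow> (\<forall>x y. f (x + y) = f x + f y) \<and> (\<forall>c x. f (s1 c x) = s2 c (f x))"

definition bilin_map ::
    "('k::field \<Rightarrow> 'a::ab_group_add \<Rightarrow> 'a) \<Rightarrow> ('k \<Rightarrow> 'b::ab_group_add \<Rightarrow> 'b) \<Rightarrow> ('a \<Rightarrow> 'a \<Rightarrow> 'b) \<Rightarrow> bool"
where
  "bilin_map s1 s2 \<beta> \<longleftrightarrow> (\<forall>u. lin_map s1 s2 (\<beta> u)) \<and> (\<forall>v. lin_map s1 s2 (\<lambda>u. \<beta> u v))"

definition trilin_map ::
    "('k::field \<Rightarrow> 'a::ab_group_add \<Rightarrow> 'a) \<Rightarrow> ('k \<Rightarrow> 'b::ab_group_add \<Rightarrow> 'b) \<Rightarrow> ('a \<Rightarrow> 'a \<Rightarrow> 'a \<Rightarrow> 'b) \<Rightarrow> bool"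
where
  "trilin_map s1 s2 \<tau> \<longleftrightarrow> (\<forall>u v. lin_map s1 s2 (\<tau> u v)) \<and> (\<forall>u w. lin_map s1 s2 (\<lambda>v. \<tau> u v w))
     \<and> (\<forall>v w. lin_map s1 s2 (\<lambda>u. \<tau> u v w))"

definition quadrilin_map ::
    "('k::field \<Rightarrow> 'a::ab_group_add \<Rightarrow> 'a) \<Rightarrow> ('k \<Rightarrow> 'b::ab_group_add \<Rightarrow> 'b) \<Rightarrow> ('a \<Rightarrow> 'a \<Rightarrow> 'a \<Rightarrow> 'a \<Rightarrow> 'b) \<Rightarrow> bool"
where
  "quadrilin_map s1 s2 \<chi> \<longleftrightarrow>
     (\<forall>b c d. lin_map s1 s2 (\<lambda>a. \<chi> a b c d)) \<and> (\<forall>a c d. lin_map s1 s2 (\<lambda>b. \<chi> a b c d))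
     \<and> (\<forall>a b d. lin_map s1 s2 (\<lambda>c. \<chi> a b c d)) \<and> (\<forall>a b c. lin_map s1 s2 (\<lambda>d. \<chi> a b c d))"

definition scale_mult_compat :: "('k::field \<Rightarrow> 'a::ring \<Rightarrow> 'a) \<Rightarrow> bool" where
  "scale_mult_compat s \<longleftrightarrow> (\<forall>c x y. s c (x * y) = s c x * y \<and> s c (x * y) = x * s c y)"

definition sweedler :: "('h \<Rightarrow> ('h \<times> 'h) list) \<Rightarrow> ('h \<Rightarrow> 'h \<Rightarrow> 'v::comm_monoid_add) \<Rightarrow> 'h \<Rightarrow> 'v"
where
  "sweedler \<Delta> \<beta> x = (\<Sum>(u, v)\<leftarrow>\<Delta> x. \<beta> u v)"

lemma lin_map_additive: "lin_map s1 s2 f \<Longrightarrow> additive f"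
  by (simp add: lin_map_def additive_def)

lemma lin_map_scale: "lin_map s1 s2 f \<Longrightarrow> f (s1 c x) = s2 c (f x)"
  by (simp add: lin_map_def)

lemma linear_imp_lin_map: "Vector_Spaces.linear s1 s2 f \<Longrightarrow> lin_map s1 s2 f"
  by (simp add: linear_iff lin_map_def)

lemma lin_map_imp_linear:
  "vector_space s1 \<Longrightarrow> vector_space s2 \<Longrightarrow> lin_map s1 s2 f \<Longrightarrow> Vector_Spaces.linear s1 s2 f"
  by (simp add: linear_iff lin_map_def)

lemma (in additive) sum_list_map: "f (\<Sum>x\<leftarrow>xs. g x) = (\<Sum>x\<leftarrow>xs. f (g x))"
  by (induction xs) (simp_all add: zero add)

lemma lin_map_sum_list: "lin_map s1 s2 f \<Longrightarrow> f (\<Sum>x\<leftarrow>xs. g x) = (\<Sum>x\<leftarrow>xs. f (g x))"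
  by (rule additive.sum_list_map[OF lin_map_additive])

lemma sum_list_map_concat: "(\<Sum>x\<leftarrow>concat xss. f x) = (\<Sum>xs\<leftarrow>xss. \<Sum>x\<leftarrow>xs. f x)"
  by (induction xss) simp_all

lemma sum_list_commute:
  fixes f :: "'a \<Rightarrow> 'b \<Rightarrow> 'c::comm_monoid_add"
  shows "(\<Sum>a\<leftarrow>xs. \<Sum>b\<leftarrow>ys. f a b) = (\<Sum>b\<leftarrow>ys. \<Sum>a\<leftarrow>xs. f a b)"
  by (induction xs) (simp_all add: sum_list_addf)

lemma sweedler_cong: "(\<And>u v. \<beta> u v = \<gamma> u v) \<Longrightarrow> sweedler \<Delta> \<beta> x = sweedler \<Delta> \<gamma> x"
  by (simp add: sweedler_def)

lemma sweedler_additive: "additive g \<Longrightarrow> g (sweedler \<Delta> \<beta> x) = sweedler \<Delta> (\<lambda>u v. g (\<beta> u v)) x"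
  by (simp add: sweedler_def additive.sum_list_map case_prod_beta')

lemma sweedler_lin_map: "lin_map s1 s2 g \<Longrightarrow> g (sweedler \<Delta> \<beta> x) = sweedler \<Delta> (\<lambda>u v. g (\<beta> u v)) x"
  by (rule sweedler_additive[OF lin_map_additive])

lemma sweedler_scale: "vector_space s \<Longrightarrow> s c (sweedler \<Delta> \<beta> x) = sweedler \<Delta> (\<lambda>u v. s c (\<beta> u v)) x"
  by (rule sweedler_additive) (simp add: additive_def vector_space.vector_space_assms(1))

lemma sweedler_mult_left: "(c::'a::ring) * sweedler \<Delta> \<beta> x = sweedler \<Delta> (\<lambda>u v. c * \<beta> u v) x"
  by (rule sweedler_additive) (simp add: additive_def distrib_left)

lemma sweedler_mult_right: "sweedler \<Delta> \<beta> x * (c::'a::ring) = sweedler \<Delta> (\<lambda>u v. \<beta> u v * c) x"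
  by (rule sweedler_additive) (simp add: additive_def distrib_right)

lemma sweedler_commute:
  "sweedler \<Delta> (\<lambda>u v. sweedler \<Delta>' (\<gamma> u v) y) x = sweedler \<Delta>' (\<lambda>u' v'. sweedler \<Delta> (\<lambda>u v. \<gamma> u v u' v') x) y"
  unfolding sweedler_def
  using sum_list_commute[where f="\<lambda>(u, v) (u', v'). \<gamma> u v u' v'" and xs="\<Delta> x" and ys="\<Delta>' y"]
  by (simp add: case_prod_beta')

lemma lin_map_id: "lin_map s s (\<lambda>x. x)"
  by (simp add: lin_map_def)

lemma lin_map_comp: "lin_map s2 s3 g \<Longrightarrow> lin_map s1 s2 f \<Longrightarrow> lin_map s1 s3 (\<lambda>x. g (f x))"
  by (simp add: lin_map_def)

lemma lin_map_mult_right: "scale_mult_compat s2 \<Longrightarrow> lin_map s1 s2 f \<Longrightarrow> lin_map s1 s2 (\<lambda>x. f x * c)"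
  by (simp add: lin_map_def scale_mult_compat_def distrib_right)

lemma lin_map_mult_left: "scale_mult_compat s2 \<Longrightarrow> lin_map s1 s2 f \<Longrightarrow> lin_map s1 s2 (\<lambda>x. c * f x)"
  unfolding lin_map_def scale_mult_compat_def by (simp add: distrib_left) metis

lemma lin_map_scale_left: "vector_space s2 \<Longrightarrow> lin_map s1 (*) g \<Longrightarrow> lin_map s1 s2 (\<lambda>p. s2 (g p) w)"
  by (simp add: lin_map_def vector_space.vector_space_assms(2,3))

lemma lin_map_sweedler_param:
  assumes "vector_space s2" and "\<And>u v. lin_map s1 s2 (\<lambda>p. \<gamma> p u v)"
  shows "lin_map s1 s2 (\<lambda>p. sweedler \<Delta> (\<gamma> p) x)"
proof -
  have "sweedler \<Delta> (\<gamma> (p + q)) x = sweedler \<Delta> (\<gamma> p) x + sweedler \<Delta> (\<gamma> q) x" for p q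
    using assms(2) by (simp add: lin_map_def sweedler_def case_prod_beta' sum_list_addf)
  moreover have "sweedler \<Delta> (\<gamma> (s1 c p)) x = s2 c (sweedler \<Delta> (\<gamma> p) x)" for c p
    using assms(2) by (simp add: sweedler_scale[OF assms(1)]) (simp add: lin_map_def sweedler_def)
  ultimately show ?thesis by (simp add: lin_map_def)
qed

lemma bilin_mapI:
  "(\<And>u. lin_map s1 s2 (\<beta> u)) \<Longrightarrow> (\<And>v. lin_map s1 s2 (\<lambda>u. \<beta> u v)) \<Longrightarrow> bilin_map s1 s2 \<beta>"
  by (simp add: bilin_map_def)

lemma trilin_mapI:
  "(\<And>u v. lin_map s1 s2 (\<tau> u v)) \<Longrightarrow> (\<And>u w. lin_map s1 s2 (\<lambda>v. \<tau> u v w)) \<Longrightarrow>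
   (\<And>v w. lin_map s1 s2 (\<lambda>u. \<tau> u v w)) \<Longrightarrow> trilin_map s1 s2 \<tau>"
  by (simp add: trilin_map_def)

lemma bilin_map_comp_left: "bilin_map s1 s2 \<beta> \<Longrightarrow> lin_map s0 s1 f \<Longrightarrow> lin_map s0 s2 (\<lambda>p. \<beta> (f p) v)"
  by (simp add: bilin_map_def lin_map_def)

lemma bilin_map_comp_right: "bilin_map s1 s2 \<beta> \<Longrightarrow> lin_map s0 s1 f \<Longrightarrow> lin_map s0 s2 (\<lambda>p. \<beta> u (f p))"
  by (simp add: bilin_map_def lin_map_def)

lemma quadrilin_mapD:
  assumes "quadrilin_map s1 s2 \<chi>"
  shows "lin_map s1 s2 (\<lambda>a. \<chi> a b c d)" "lin_map s1 s2 (\<lambda>b. \<chi> a b c d)"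
    "lin_map s1 s2 (\<lambda>c. \<chi> a b c d)" "lin_map s1 s2 (\<lambda>d. \<chi> a b c d)"
  using assms by (auto simp: quadrilin_map_def)

lemma vector_space_field_mult: "vector_space ((*) :: 'k::field \<Rightarrow> 'k \<Rightarrow> 'k)"
  by unfold_locales (auto simp: algebra_simps)

lemma (in vector_space) exists_functional_nonzero:
  assumes "v \<noteq> 0"
  shows "\<exists>\<phi>. lin_map scale (*) \<phi> \<and> \<phi> v \<noteq> 0"
proof -
  have ind: "independent {v}" using assms by (simp add: independent_insert)
  let ?B = "extend_basis {v}"
  have B: "independent ?B" "span ?B = UNIV" "v \<in> ?B"
    using independent_extend_basis[OF ind] span_extend_basis[OF ind] extend_basis_superset[OF ind] by auto
  have "lin_map scale (*) (\<lambda>w. representation ?B w v)"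
    using linear_representation[OF B(1,2)] by (rule linear_imp_lin_map)
  moreover have "representation ?B v v = 1"
    using representation_basis[OF B(1) B(3)] by simp
  ultimately show ?thesis by (intro exI[of _ "\<lambda>w. representation ?B w v"]) simp
qed

lemma (in vector_space) eq_if_functionals_eq:
  assumes "\<And>\<phi>. lin_map scale (*) \<phi> \<Longrightarrow> \<phi> a = \<phi> b"
  shows "a = b"
proof (rule ccontr)
  assume "a \<noteq> b"
  then obtain \<phi> where \<phi>: "lin_map scale (*) \<phi>" "\<phi> (a - b) \<noteq> 0"
    using exists_functional_nonzero[of "a - b"] by auto
  then show False
    using assms additive.diff[OF lin_map_additive[OF \<phi>(1)]] by simp
qed

lemma tensor2_eq_bilin_map:
  assumes "vector_space sc" and V: "vector_space sV"
    and eq: "tensor2_eq sc xs ys" and \<beta>: "bilin_map sc sV \<beta>"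
  shows "(\<Sum>(u, v)\<leftarrow>xs. \<beta> u v) = (\<Sum>(u, v)\<leftarrow>ys. \<beta> u v)"
proof (rule vector_space.eq_if_functionals_eq[OF V])
  fix \<phi> assume \<phi>: "lin_map sV (*) \<phi>"
  have "bilinear_form sc (\<lambda>u v. \<phi> (\<beta> u v))"
    using \<beta> \<phi> assms(1) vector_space_field_mult
    by (auto simp: bilinear_form_def bilin_map_def intro!: lin_map_imp_linear lin_map_comp[OF \<phi>])
  then have "(\<Sum>(u, v)\<leftarrow>xs. \<phi> (\<beta> u v)) = (\<Sum>(u, v)\<leftarrow>ys. \<phi> (\<beta> u v))"
    using eq unfolding tensor2_eq_def by blast
  then show "\<phi> (\<Sum>(u, v)\<leftarrow>xs. \<beta> u v) = \<phi> (\<Sum>(u, v)\<leftarrow>ys. \<beta> u v)"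
    by (simp add: lin_map_sum_list[OF \<phi>] case_prod_beta')
qed

lemma tensor3_eq_trilin_map:
  assumes "vector_space sc" and V: "vector_space sV"
    and eq: "tensor3_eq sc xs ys" and \<tau>: "trilin_map sc sV \<tau>"
  shows "(\<Sum>(u, v, w)\<leftarrow>xs. \<tau> u v w) = (\<Sum>(u, v, w)\<leftarrow>ys. \<tau> u v w)"
proof (rule vector_space.eq_if_functionals_eq[OF V])
  fix \<phi> assume \<phi>: "lin_map sV (*) \<phi>"
  have "trilinear_form sc (\<lambda>u v w. \<phi> (\<tau> u v w))"
    using \<tau> \<phi> assms(1) vector_space_field_mult
    by (auto simp: trilinear_form_def trilin_map_def intro!: lin_map_imp_linear lin_map_comp[OF \<phi>])
  then have "(\<Sum>(u, v, w)\<leftarrow>xs. \<phi> (\<tau> u v w)) = (\<Sum>(u, v, w)\<leftarrow>ys. \<phi> (\<tau> u v w))"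
    using eq unfolding tensor3_eq_def by blast
  then show "\<phi> (\<Sum>(u, v, w)\<leftarrow>xs. \<tau> u v w) = \<phi> (\<Sum>(u, v, w)\<leftarrow>ys. \<tau> u v w)"
    by (simp add: lin_map_sum_list[OF \<phi>] case_prod_beta')
qed

section \<open>Cocommutative Hopf algebras\<close>

locale cocomm_hopf =
  fixes sc :: "'k::field_char_0 \<Rightarrow> 'h::ring_1 \<Rightarrow> 'h"
    and \<Delta> :: "'h \<Rightarrow> ('h \<times> 'h) list" and \<epsilon> :: "'h \<Rightarrow> 'k" and S :: "'h \<Rightarrow> 'h"
  assumes cocomm_hopf_algebra: "cocomm_hopf_algebra sc \<Delta> \<epsilon> S"

sublocale cocomm_hopf \<subseteq> H: vector_space sc
  using cocomm_hopf_algebra by (simp add: cocomm_hopf_algebra_def is_algebra_def)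

context cocomm_hopf
begin

lemma scale_mult_compat_H: "scale_mult_compat sc"
  using cocomm_hopf_algebra unfolding cocomm_hopf_algebra_def is_algebra_def scale_mult_compat_def
  by metis

lemma scale_mult_left: "sc c x * y = sc c (x * y)"
  and scale_mult_right: "x * sc c y = sc c (x * y)"
  using scale_mult_compat_H unfolding scale_mult_compat_def by metis+

lemma lin_map_counit: "lin_map sc (*) \<epsilon>"
  using cocomm_hopf_algebra by (simp add: cocomm_hopf_algebra_def linear_imp_lin_map)

lemma lin_map_antipode: "lin_map sc sc S"
  using cocomm_hopf_algebra by (simp add: cocomm_hopf_algebra_def linear_imp_lin_map)

lemma counit_mult: "\<epsilon> (x * y) = \<epsilon> x * \<epsilon> y"
  and counit_one: "\<epsilon> 1 = 1"
  using cocomm_hopf_algebra by (auto simp: cocomm_hopf_algebra_def)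

lemma coproduct_add: "tensor2_eq sc (\<Delta> (x + y)) (\<Delta> x @ \<Delta> y)"
  and coproduct_scale: "tensor2_eq sc (\<Delta> (sc c x)) (map (\<lambda>(u, v). (sc c u, v)) (\<Delta> x))"
  and coproduct_coassoc: "tensor3_eq sc
          (concat (map (\<lambda>(u, v). map (\<lambda>(u1, u2). (u1, u2, v)) (\<Delta> u)) (\<Delta> x)))
          (concat (map (\<lambda>(u, v). map (\<lambda>(v1, v2). (u, v1, v2)) (\<Delta> v)) (\<Delta> x)))"
  and coproduct_mult: "tensor2_eq sc (\<Delta> (x * y))
          (concat (map (\<lambda>(u, v). map (\<lambda>(u', v'). (u * u', v * v')) (\<Delta> y)) (\<Delta> x)))"
  and coproduct_one: "tensor2_eq sc (\<Delta> 1) [(1, 1)]"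
  and coproduct_cocomm: "tensor2_eq sc (\<Delta> x) (map prod.swap (\<Delta> x))"
  using cocomm_hopf_algebra by (simp_all add: cocomm_hopf_algebra_def)

lemma lin_map_sweedler:
  assumes V: "vector_space sV" and \<beta>: "bilin_map sc sV \<beta>"
  shows "lin_map sc sV (sweedler \<Delta> \<beta>)"
proof -
  have "sweedler \<Delta> \<beta> (x + y) = sweedler \<Delta> \<beta> x + sweedler \<Delta> \<beta> y" for x y
    using tensor2_eq_bilin_map[OF H.vector_space_axioms V coproduct_add \<beta>] by (simp add: sweedler_def)
  moreover have "sweedler \<Delta> \<beta> (sc c x) = sV c (sweedler \<Delta> \<beta> x)" for c x
  proof -
    have "sweedler \<Delta> \<beta> (sc c x) = (\<Sum>(u, v)\<leftarrow>\<Delta> x. \<beta> (sc c u) v)"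
      using tensor2_eq_bilin_map[OF H.vector_space_axioms V coproduct_scale \<beta>]
      by (simp add: sweedler_def case_prod_beta' o_def)
    also have "\<dots> = sweedler \<Delta> (\<lambda>u v. sV c (\<beta> u v)) x"
      using \<beta> by (simp add: sweedler_def bilin_map_def lin_map_def)
    finally show ?thesis
      by (simp add: sweedler_scale[OF V])
  qed
  ultimately show ?thesis
    by (simp add: lin_map_def)
qed

lemma lin_map_sweedler_comp:
  "vector_space sV \<Longrightarrow> bilin_map sc sV \<beta> \<Longrightarrow> lin_map s0 sc f \<Longrightarrow> lin_map s0 sV (\<lambda>p. sweedler \<Delta> \<beta> (f p))"
  by (rule lin_map_comp[OF lin_map_sweedler])

lemmas lin_map_intros = lin_map_id lin_map_mult_right[OF scale_mult_compat_H]
  lin_map_mult_left[OF scale_mult_compat_H] lin_map_comp[OF lin_map_antipode]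
  lin_map_comp[OF lin_map_counit] lin_map_sweedler_param lin_map_sweedler_comp lin_map_scale_left
  H.vector_space_axioms bilin_mapI trilin_mapI

lemma sweedler_coassoc:
  assumes V: "vector_space sV" and \<tau>: "trilin_map sc sV \<tau>"
  shows "sweedler \<Delta> (\<lambda>u v. sweedler \<Delta> (\<lambda>a b. \<tau> a b v) u) x
       = sweedler \<Delta> (\<lambda>u v. sweedler \<Delta> (\<lambda>a b. \<tau> u a b) v) x"
  using tensor3_eq_trilin_map[OF H.vector_space_axioms V coproduct_coassoc \<tau>]
  by (simp add: sweedler_def sum_list_map_concat case_prod_beta' o_def)

lemma sweedler_cocomm:
  assumes V: "vector_space sV" and \<beta>: "bilin_map sc sV \<beta>"
  shows "sweedler \<Delta> \<beta> x = sweedler \<Delta> (\<lambda>u v. \<beta> v u) x"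
  using tensor2_eq_bilin_map[OF H.vector_space_axioms V coproduct_cocomm \<beta>]
  by (simp add: sweedler_def case_prod_beta' o_def)

lemma sweedler_counit_left:
  assumes "lin_map sc sV F"
  shows "sweedler \<Delta> (\<lambda>u v. sV (\<epsilon> u) (F v)) x = F x"
proof -
  have "F x = F (\<Sum>(u, v)\<leftarrow>\<Delta> x. sc (\<epsilon> u) v)"
    using cocomm_hopf_algebra by (simp add: cocomm_hopf_algebra_def)
  then show ?thesis
    by (simp add: sweedler_def lin_map_sum_list[OF assms] lin_map_scale[OF assms] case_prod_beta')
qed

lemma sweedler_counit_right:
  assumes "lin_map sc sV F"
  shows "sweedler \<Delta> (\<lambda>u v. sV (\<epsilon> v) (F u)) x = F x"
proof -
  have "F x = F (\<Sum>(u, v)\<leftarrow>\<Delta> x. sc (\<epsilon> v) u)"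
    using cocomm_hopf_algebra by (simp add: cocomm_hopf_algebra_def)
  then show ?thesis
    by (simp add: sweedler_def lin_map_sum_list[OF assms] lin_map_scale[OF assms] case_prod_beta')
qed

lemma sweedler_mult:
  assumes V: "vector_space sV" and \<beta>: "bilin_map sc sV \<beta>"
  shows "sweedler \<Delta> \<beta> (x * y) = sweedler \<Delta> (\<lambda>u v. sweedler \<Delta> (\<lambda>u' v'. \<beta> (u * u') (v * v')) y) x"
  using tensor2_eq_bilin_map[OF H.vector_space_axioms V coproduct_mult \<beta>]
  by (simp add: sweedler_def sum_list_map_concat case_prod_beta' o_def)

lemma sweedler_one:
  assumes V: "vector_space sV" and \<beta>: "bilin_map sc sV \<beta>"
  shows "sweedler \<Delta> \<beta> 1 = \<beta> 1 1"
  using tensor2_eq_bilin_map[OF H.vector_space_axioms V coproduct_one \<beta>] by (simp add: sweedler_def)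

lemma sweedler_antipode_left: "sweedler \<Delta> (\<lambda>u v. S u * v) x = sc (\<epsilon> x) 1"
  and sweedler_antipode_right: "sweedler \<Delta> (\<lambda>u v. u * S v) x = sc (\<epsilon> x) 1"
  using cocomm_hopf_algebra by (simp_all add: cocomm_hopf_algebra_def sweedler_def)

lemma sweedler_antipode_left_lin:
  assumes "lin_map sc sV F"
  shows "sweedler \<Delta> (\<lambda>u v. F (S u * v)) x = sV (\<epsilon> x) (F 1)"
  by (simp add: sweedler_lin_map[OF assms, symmetric] sweedler_antipode_left lin_map_scale[OF assms])

lemma sweedler_antipode_right_lin:
  assumes "lin_map sc sV F"
  shows "sweedler \<Delta> (\<lambda>u v. F (u * S v)) x = sV (\<epsilon> x) (F 1)"
  by (simp add: sweedler_lin_map[OF assms, symmetric] sweedler_antipode_right lin_map_scale[OF assms])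

lemma sweedler_coassoc4:
  assumes V: "vector_space sV" and \<chi>: "quadrilin_map sc sV \<chi>"
  shows "sweedler \<Delta> (\<lambda>u v. sweedler \<Delta> (\<lambda>a b. sweedler \<Delta> (\<lambda>c d. \<chi> a b c d) v) u) x
       = sweedler \<Delta> (\<lambda>a m. sweedler \<Delta> (\<lambda>n d. sweedler \<Delta> (\<lambda>b c. \<chi> a b c d) n) m) x"
proof -
  have "sweedler \<Delta> (\<lambda>u v. sweedler \<Delta> (\<lambda>a b. sweedler \<Delta> (\<lambda>c d. \<chi> a b c d) v) u) x
      = sweedler \<Delta> (\<lambda>a m. sweedler \<Delta> (\<lambda>b v. sweedler \<Delta> (\<lambda>c d. \<chi> a b c d) v) m) x"
    by (rule sweedler_coassoc[OF V]) (intro lin_map_intros V quadrilin_mapD[OF \<chi>])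
  also have "\<dots> = sweedler \<Delta> (\<lambda>a m. sweedler \<Delta> (\<lambda>n d. sweedler \<Delta> (\<lambda>b c. \<chi> a b c d) n) m) x"
    by (intro sweedler_cong sweedler_coassoc[OF V, symmetric]) (intro lin_map_intros V quadrilin_mapD[OF \<chi>])
  finally show ?thesis .
qed

lemma sweedler_swap_middle:
  assumes V: "vector_space sV" and \<chi>: "quadrilin_map sc sV \<chi>"
  shows "sweedler \<Delta> (\<lambda>u v. sweedler \<Delta> (\<lambda>a b. sweedler \<Delta> (\<lambda>c d. \<chi> a b c d) v) u) x
       = sweedler \<Delta> (\<lambda>u v. sweedler \<Delta> (\<lambda>a b. sweedler \<Delta> (\<lambda>c d. \<chi> a c b d) v) u) x"
proof -
  have \<chi>': "quadrilin_map sc sV (\<lambda>a b c d. \<chi> a c b d)"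
    using \<chi> by (simp add: quadrilin_map_def)
  have "sweedler \<Delta> (\<lambda>u v. sweedler \<Delta> (\<lambda>a b. sweedler \<Delta> (\<lambda>c d. \<chi> a b c d) v) u) x
      = sweedler \<Delta> (\<lambda>a m. sweedler \<Delta> (\<lambda>n d. sweedler \<Delta> (\<lambda>b c. \<chi> a b c d) n) m) x"
    by (rule sweedler_coassoc4[OF V \<chi>])
  also have "\<dots> = sweedler \<Delta> (\<lambda>a m. sweedler \<Delta> (\<lambda>n d. sweedler \<Delta> (\<lambda>b c. \<chi> a c b d) n) m) x"
    by (intro sweedler_cong sweedler_cocomm[OF V]) (intro lin_map_intros V quadrilin_mapD[OF \<chi>])
  also have "\<dots> = sweedler \<Delta> (\<lambda>u v. sweedler \<Delta> (\<lambda>a b. sweedler \<Delta> (\<lambda>c d. \<chi> a c b d) v) u) x"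
    by (rule sweedler_coassoc4[OF V \<chi>', symmetric])
  finally show ?thesis .
qed

lemma antipode_one: "S 1 = 1"
proof -
  have "bilin_map sc sc (\<lambda>u v. S u * v)"
    by (intro lin_map_intros)
  then have "S 1 * 1 = sc (\<epsilon> 1) 1"
    using sweedler_antipode_left[of 1] sweedler_one[OF H.vector_space_axioms] by simp
  then show ?thesis
    by (simp add: counit_one)
qed

lemma sweedler_antipode_absorb:
  assumes F: "lin_map sc sc F"
  shows "sweedler \<Delta> (\<lambda>a b. sweedler \<Delta> (\<lambda>c d. S a * c * F d) b) x = F x"
proof -
  have "sweedler \<Delta> (\<lambda>a b. sweedler \<Delta> (\<lambda>c d. S a * c * F d) b) x
      = sweedler \<Delta> (\<lambda>u v. sweedler \<Delta> (\<lambda>a c. S a * c * F v) u) x"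
    by (rule sweedler_coassoc[OF H.vector_space_axioms, symmetric]) (intro lin_map_intros F)
  also have "\<dots> = sweedler \<Delta> (\<lambda>u v. sc (\<epsilon> u) (F v)) x"
    by (simp add: sweedler_mult_right[symmetric] sweedler_antipode_left scale_mult_left)
  also have "\<dots> = F x"
    by (rule sweedler_counit_left[OF F])
  finally show ?thesis .
qed

lemma antipode_mult: "S (x * y) = S y * S x"
proof -
  (* Both sides equal the sum of S(y_1) S(x_1) x_2 y_2 S(x_3 y_3): on the left absorb
     S(x_1) x_2 and S(y_1) y_2, on the right contract x_2 y_2 S(x_3 y_3) to \<epsilon>(x_2 y_2). *)
  define G where "G w b = sweedler \<Delta> (\<lambda>c d. c * S (b * d)) w" for w b
  have G_lin: "lin_map sc sc (G w)" for w
    unfolding G_def by (intro lin_map_intros)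
  have G_counit: "sweedler \<Delta> (\<lambda>c d. c * G w d) v = sc (\<epsilon> (v * w)) 1" for v w
  proof -
    have "bilin_map sc sc (\<lambda>c d. c * S d)"
      by (intro lin_map_intros)
    from sweedler_mult[OF H.vector_space_axioms this, of v w] show ?thesis
      by (simp add: G_def sweedler_mult_left sweedler_antipode_right mult.assoc)
  qed
  have G_absorb: "G b x = sweedler \<Delta> (\<lambda>c d. S c * sc (\<epsilon> (d * b)) 1) x" for b
  proof -
    have "G b x = sweedler \<Delta> (\<lambda>a' b'. sweedler \<Delta> (\<lambda>c d. S a' * c * G b d) b') x"
      by (rule sweedler_antipode_absorb[OF G_lin, symmetric])
    also have "\<dots> = sweedler \<Delta> (\<lambda>c d. S c * sc (\<epsilon> (d * b)) 1) x"
      by (simp add: sweedler_mult_left[symmetric] mult.assoc G_counit)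
    finally show ?thesis .
  qed
  have "S (x * y) = sweedler \<Delta> (\<lambda>a b. sweedler \<Delta> (\<lambda>c d. S a * c * S (x * d)) b) y"
    by (rule sweedler_antipode_absorb[symmetric]) (intro lin_map_intros)
  also have "\<dots> = sweedler \<Delta> (\<lambda>a b. S a * G b x) y"
    by (simp add: G_def sweedler_mult_left mult.assoc)
  also have "\<dots> = sweedler \<Delta> (\<lambda>a b. S a * sweedler \<Delta> (\<lambda>c d. S c * sc (\<epsilon> (d * b)) 1) x) y"
    by (simp add: G_absorb)
  also have "\<dots> = sweedler \<Delta> (\<lambda>a b. sc (\<epsilon> b) (S a) * sweedler \<Delta> (\<lambda>c d. sc (\<epsilon> d) (S c)) x) y"
    by (simp add: sweedler_mult_left counit_mult scale_mult_left scale_mult_right mult.commute)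
  also have "\<dots> = sweedler \<Delta> (\<lambda>a b. sc (\<epsilon> b) (S a)) y * sweedler \<Delta> (\<lambda>c d. sc (\<epsilon> d) (S c)) x"
    by (rule sweedler_mult_right[symmetric])
  also have "\<dots> = S y * S x"
    by (simp only: sweedler_counit_right[OF lin_map_antipode])
  finally show ?thesis .
qed

lemma scale_counit_expand:
  assumes V: "vector_space sV" and \<beta>: "bilin_map sc sV \<beta>"
  shows "sV (\<epsilon> v) (\<beta> P Q)
       = sweedler \<Delta> (\<lambda>w r. sweedler \<Delta> (\<lambda>c d. sweedler \<Delta> (\<lambda>a b. \<beta> (P * a * S d) (Q * b * S c)) w) r) v"
proof -
  note lin = lin_map_intros V bilin_map_comp_left[OF \<beta>] bilin_map_comp_right[OF \<beta>]
  have \<chi>: "quadrilin_map sc sV (\<lambda>a b c d. \<beta> (P * a * S d) (Q * b * S c))"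
    unfolding quadrilin_map_def by (intro allI conjI lin)
  have "sweedler \<Delta> (\<lambda>w r. sweedler \<Delta> (\<lambda>c d. sweedler \<Delta> (\<lambda>a b. \<beta> (P * a * S d) (Q * b * S c)) w) r) v
      = sweedler \<Delta> (\<lambda>w r. sweedler \<Delta> (\<lambda>a b. sweedler \<Delta> (\<lambda>c d. \<beta> (P * a * S d) (Q * b * S c)) r) w) v"
    by (intro sweedler_cong sweedler_commute)
  also have "\<dots> = sweedler \<Delta> (\<lambda>a m. sweedler \<Delta> (\<lambda>n d. sweedler \<Delta> (\<lambda>b c. \<beta> (P * a * S d) (Q * b * S c)) n) m) v"
    by (rule sweedler_coassoc4[OF V \<chi>])
  also have "\<dots> = sweedler \<Delta> (\<lambda>a m. sweedler \<Delta> (\<lambda>n d. sV (\<epsilon> n) (\<beta> (P * a * S d) Q)) m) v"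
  proof (intro sweedler_cong)
    fix a d n
    show "sweedler \<Delta> (\<lambda>b c. \<beta> (P * a * S d) (Q * b * S c)) n = sV (\<epsilon> n) (\<beta> (P * a * S d) Q)"
      using sweedler_antipode_right_lin[where F="\<lambda>z. \<beta> (P * a * S d) (Q * z)" and sV=sV]
      by (simp add: mult.assoc lin)
  qed
  also have "\<dots> = sweedler \<Delta> (\<lambda>a m. \<beta> (P * a * S m) Q) v"
    by (intro sweedler_cong sweedler_counit_left lin)
  also have "\<dots> = sV (\<epsilon> v) (\<beta> P Q)"
    using sweedler_antipode_right_lin[where F="\<lambda>z. \<beta> (P * z) Q" and sV=sV and x=v]
    by (simp add: mult.assoc lin)
  finally show ?thesis ..
qed

lemma scale_counit_expand_sweedler:
  assumes V: "vector_space sV" and \<beta>: "bilin_map sc sV \<beta>"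
  shows "sV (\<epsilon> v) (sweedler \<Delta> \<beta> y)
       = sweedler \<Delta> (\<lambda>w r. sweedler \<Delta> (\<lambda>c d. sweedler \<Delta> (\<lambda>p q. \<beta> (p * S d) (q * S c)) (y * w)) r) v"
proof -
  note lin = lin_map_intros V bilin_map_comp_left[OF \<beta>] bilin_map_comp_right[OF \<beta>]
  have "sV (\<epsilon> v) (sweedler \<Delta> \<beta> y) = sweedler \<Delta> (\<lambda>P Q.
      sweedler \<Delta> (\<lambda>w r. sweedler \<Delta> (\<lambda>c d. sweedler \<Delta> (\<lambda>a b. \<beta> (P * a * S d) (Q * b * S c)) w) r) v) y"
    by (simp add: sweedler_scale[OF V] scale_counit_expand[OF V \<beta>])
  also have "\<dots> = sweedler \<Delta> (\<lambda>w r. sweedler \<Delta> (\<lambda>P Q.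
      sweedler \<Delta> (\<lambda>c d. sweedler \<Delta> (\<lambda>a b. \<beta> (P * a * S d) (Q * b * S c)) w) r) y) v"
    by (rule sweedler_commute)
  also have "\<dots> = sweedler \<Delta> (\<lambda>w r. sweedler \<Delta> (\<lambda>c d.
      sweedler \<Delta> (\<lambda>P Q. sweedler \<Delta> (\<lambda>a b. \<beta> (P * a * S d) (Q * b * S c)) w) y) r) v"
    by (intro sweedler_cong sweedler_commute)
  also have "\<dots> = sweedler \<Delta> (\<lambda>w r. sweedler \<Delta> (\<lambda>c d. sweedler \<Delta> (\<lambda>p q. \<beta> (p * S d) (q * S c)) (y * w)) r) v"
    by (simp add: sweedler_mult[OF V] lin)
  finally show ?thesis .
qed

(* \<Delta>(S x) = \<epsilon>(x_2) \<Delta>(S x_1) = \<Delta>(S x_1 x_2)(S x_4 \<otimes> S x_3) = S x_2 \<otimes> S x_1, then cocommutativity. *)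
lemma sweedler_antipode:
  assumes V: "vector_space sV" and \<beta>: "bilin_map sc sV \<beta>"
  shows "sweedler \<Delta> \<beta> (S x) = sweedler \<Delta> (\<lambda>p q. \<beta> (S p) (S q)) x"
proof -
  note lin = lin_map_intros lin_map_sweedler V bilin_map_comp_left[OF \<beta>] bilin_map_comp_right[OF \<beta>]
  define F where "F r z = sweedler \<Delta> (\<lambda>c d. sweedler \<Delta> (\<lambda>p q. \<beta> (p * S d) (q * S c)) z) r" for r z
  have F_lin: "lin_map sc sV (F r)" for r
    unfolding F_def by (intro lin)
  have "sweedler \<Delta> \<beta> (S x) = sweedler \<Delta> (\<lambda>u v. sV (\<epsilon> v) (sweedler \<Delta> \<beta> (S u))) x"
    by (rule sweedler_counit_right[symmetric]) (intro lin)
  also have "\<dots> = sweedler \<Delta> (\<lambda>u v. sweedler \<Delta> (\<lambda>w r. F r (S u * w)) v) x"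
    by (simp add: scale_counit_expand_sweedler[OF V \<beta>] F_def)
  also have "\<dots> = sweedler \<Delta> (\<lambda>y r. sweedler \<Delta> (\<lambda>u w. F r (S u * w)) y) x"
    unfolding F_def by (rule sweedler_coassoc[OF V, symmetric]) (intro lin)
  also have "\<dots> = sweedler \<Delta> (\<lambda>y r. sV (\<epsilon> y) (F r 1)) x"
    by (simp add: sweedler_antipode_left_lin[OF F_lin])
  also have "\<dots> = sweedler \<Delta> (\<lambda>c d. \<beta> (S d) (S c)) x"
    by (simp add: sweedler_counit_left F_def sweedler_one[OF V] lin)
  also have "\<dots> = sweedler \<Delta> (\<lambda>p q. \<beta> (S p) (S q)) x"
    by (rule sweedler_cocomm[OF V, symmetric]) (intro lin)
  finally show ?thesis .
qed

end

section \<open>The coproduct of the cocycle\<close>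

context cocomm_hopf
begin

lemma lin_map_coalgebra_hom: "coalgebra_hom sc \<Delta> \<epsilon> B \<Longrightarrow> lin_map sc sc B"
  by (simp add: coalgebra_hom_def linear_imp_lin_map)

lemma counit_coalgebra_hom: "coalgebra_hom sc \<Delta> \<epsilon> B \<Longrightarrow> \<epsilon> (B x) = \<epsilon> x"
  by (simp add: coalgebra_hom_def)

lemma sweedler_coalgebra_hom:
  assumes B: "coalgebra_hom sc \<Delta> \<epsilon> B" and V: "vector_space sV" and \<beta>: "bilin_map sc sV \<beta>"
  shows "sweedler \<Delta> \<beta> (B x) = sweedler \<Delta> (\<lambda>u v. \<beta> (B u) (B v)) x"
proof -
  have "tensor2_eq sc (\<Delta> (B x)) (map (\<lambda>(u, v). (B u, B v)) (\<Delta> x))"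
    using B by (simp add: coalgebra_hom_def)
  from tensor2_eq_bilin_map[OF H.vector_space_axioms V this \<beta>] show ?thesis
    by (simp add: sweedler_def case_prod_beta' o_def)
qed

context
  fixes B1 B2
  assumes B1: "coalgebra_hom sc \<Delta> \<epsilon> B1" and B2: "coalgebra_hom sc \<Delta> \<epsilon> B2"
begin

lemma sweedler_B1_antipode_B2:
  assumes V: "vector_space sV" and \<beta>: "bilin_map sc sV \<beta>"
  shows "sweedler \<Delta> \<beta> (B1 u * S (B2 v))
       = sweedler \<Delta> (\<lambda>p q. sweedler \<Delta> (\<lambda>c d. \<beta> (B1 p * S (B2 c)) (B1 q * S (B2 d))) v) u"
proof -
  note lin = lin_map_intros V bilin_map_comp_left[OF \<beta>] bilin_map_comp_right[OF \<beta>]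
    lin_map_comp[OF _ lin_map_coalgebra_hom[OF B1]] lin_map_comp[OF _ lin_map_coalgebra_hom[OF B2]]
  have "sweedler \<Delta> \<beta> (B1 u * S (B2 v))
      = sweedler \<Delta> (\<lambda>p q. sweedler \<Delta> (\<lambda>p' q'. \<beta> (p * p') (q * q')) (S (B2 v))) (B1 u)"
    by (rule sweedler_mult[OF V \<beta>])
  also have "\<dots> = sweedler \<Delta> (\<lambda>p q. sweedler \<Delta> (\<lambda>p' q'. \<beta> (B1 p * p') (B1 q * q')) (S (B2 v))) u"
    by (rule sweedler_coalgebra_hom[OF B1 V]) (intro lin)
  also have "\<dots> = sweedler \<Delta> (\<lambda>p q. sweedler \<Delta> (\<lambda>p' q'. \<beta> (B1 p * S p') (B1 q * S q')) (B2 v)) u"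
    by (intro sweedler_cong sweedler_antipode[OF V]) (intro lin)
  also have "\<dots> = sweedler \<Delta> (\<lambda>p q. sweedler \<Delta> (\<lambda>c d. \<beta> (B1 p * S (B2 c)) (B1 q * S (B2 d))) v) u"
    by (intro sweedler_cong sweedler_coalgebra_hom[OF B2 V]) (intro lin)
  finally show ?thesis .
qed

lemma sweedler_cocycle:
  assumes V: "vector_space sV" and \<beta>: "bilin_map sc sV \<beta>"
  shows "sweedler \<Delta> \<beta> (cocycle \<Delta> S B1 B2 a)
       = sweedler \<Delta> (\<lambda>u v. \<beta> (cocycle \<Delta> S B1 B2 u) (cocycle \<Delta> S B1 B2 v)) a"
proof -
  note lin = lin_map_intros V bilin_map_comp_left[OF \<beta>] bilin_map_comp_right[OF \<beta>]
    lin_map_comp[OF _ lin_map_coalgebra_hom[OF B1]] lin_map_comp[OF _ lin_map_coalgebra_hom[OF B2]]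
  have cocycle: "cocycle \<Delta> S B1 B2 x = sweedler \<Delta> (\<lambda>u v. B1 u * S (B2 v)) x" for x
    by (simp add: cocycle_def sweedler_def)
  have "sweedler \<Delta> \<beta> (cocycle \<Delta> S B1 B2 a) = sweedler \<Delta> (\<lambda>u v. sweedler \<Delta> \<beta> (B1 u * S (B2 v))) a"
    unfolding cocycle by (rule sweedler_lin_map[OF lin_map_sweedler[OF V \<beta>]])
  also have "\<dots> = sweedler \<Delta> (\<lambda>u v. sweedler \<Delta> (\<lambda>p q.
      sweedler \<Delta> (\<lambda>c d. \<beta> (B1 p * S (B2 c)) (B1 q * S (B2 d))) v) u) a"
    by (simp add: sweedler_B1_antipode_B2[OF V \<beta>])
  also have "\<dots> = sweedler \<Delta> (\<lambda>u v. sweedler \<Delta> (\<lambda>p q.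
      sweedler \<Delta> (\<lambda>c d. \<beta> (B1 p * S (B2 q)) (B1 c * S (B2 d))) v) u) a"
    by (rule sweedler_swap_middle[OF V]) (unfold quadrilin_map_def, intro allI conjI lin)
  also have "\<dots> = sweedler \<Delta> (\<lambda>u v. \<beta> (cocycle \<Delta> S B1 B2 u) (cocycle \<Delta> S B1 B2 v)) a"
  proof (intro sweedler_cong)
    fix u v
    have left: "lin_map sc sV (\<lambda>z. \<beta> z w)" and right: "lin_map sc sV (\<beta> w)" for w
      by (intro lin)+
    have "\<beta> (cocycle \<Delta> S B1 B2 u) (cocycle \<Delta> S B1 B2 v)
        = sweedler \<Delta> (\<lambda>p q. \<beta> (B1 p * S (B2 q)) (cocycle \<Delta> S B1 B2 v)) u"
      unfolding cocycle[of u] by (rule sweedler_lin_map[OF left])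
    also have "\<dots> = sweedler \<Delta> (\<lambda>p q. sweedler \<Delta> (\<lambda>c d. \<beta> (B1 p * S (B2 q)) (B1 c * S (B2 d))) v) u"
      unfolding cocycle[of v] by (simp add: sweedler_lin_map[OF right])
    finally show "sweedler \<Delta> (\<lambda>p q. sweedler \<Delta> (\<lambda>c d. \<beta> (B1 p * S (B2 q)) (B1 c * S (B2 d))) v) u
        = \<beta> (cocycle \<Delta> S B1 B2 u) (cocycle \<Delta> S B1 B2 v)" ..
  qed
  finally show ?thesis .
qed

lemma coproduct_H1:
  assumes "x \<in> H1 \<Delta> S B1 B2"
  shows "\<exists>xs. set xs \<subseteq> H1 \<Delta> S B1 B2 \<times> H1 \<Delta> S B1 B2 \<and> tensor2_eq sc (\<Delta> x) xs"
proof -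
  obtain a where a: "x = cocycle \<Delta> S B1 B2 a"
    using assms by (auto simp: H1_def)
  let ?xs = "map (\<lambda>(u, v). (cocycle \<Delta> S B1 B2 u, cocycle \<Delta> S B1 B2 v)) (\<Delta> a)"
  have "tensor2_eq sc (\<Delta> x) ?xs"
    unfolding tensor2_eq_def
  proof (intro allI impI)
    fix \<beta> :: "'h \<Rightarrow> 'h \<Rightarrow> 'k"
    assume "bilinear_form sc \<beta>"
    then have "bilin_map sc (*) \<beta>"
      by (simp add: bilinear_form_def bilin_map_def linear_imp_lin_map)
    from sweedler_cocycle[OF vector_space_field_mult this, of a]
    show "(\<Sum>(u, v)\<leftarrow>\<Delta> x. \<beta> u v) = (\<Sum>(u, v)\<leftarrow>?xs. \<beta> u v)"
      by (simp add: a sweedler_def case_prod_beta' o_def)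
  qed
  moreover have "set ?xs \<subseteq> H1 \<Delta> S B1 B2 \<times> H1 \<Delta> S B1 B2"
    by (auto simp: H1_def)
  ultimately show ?thesis
    by blast
qed

end

end

section \<open>Characters\<close>

locale hopf_characters = cocomm_hopf sc \<Delta> \<epsilon> S
  for sc :: "'k::field_char_0 \<Rightarrow> 'h::ring_1 \<Rightarrow> 'h" and \<Delta> \<epsilon> S +
  fixes scA :: "'k \<Rightarrow> 'c::comm_ring_1 \<Rightarrow> 'c"
  assumes comm_algebra_A: "comm_algebra scA"

sublocale hopf_characters \<subseteq> A: vector_space scA
  using comm_algebra_A by (simp add: comm_algebra_def)

context hopf_characters
begin

abbreviation CharH where "CharH \<equiv> Char_H sc \<Delta> \<epsilon> scA"

lemma scale_mult_compat_A: "scale_mult_compat scA"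
  using comm_algebra_A unfolding scale_mult_compat_def comm_algebra_def by (metis mult.commute)

lemma scaleA_one_mult: "scA c 1 * a = scA c a"
  using comm_algebra_A unfolding comm_algebra_def by (metis mult_1)

lemmas lin_map_intros_A = lin_map_intros lin_map_mult_right[OF scale_mult_compat_A]
  lin_map_mult_left[OF scale_mult_compat_A] A.vector_space_axioms

lemma mem_Char_H_iff:
  "f \<in> carrier CharH \<longleftrightarrow> lin_map sc scA f \<and> f 1 = 1 \<and> (\<forall>x y. f (x * y) = f x * f y)"
  using H.vector_space_axioms A.vector_space_axioms
  by (auto simp: Char_H_def lin_map_imp_linear linear_imp_lin_map)

lemma mult_Char_H: "f \<otimes>\<^bsub>CharH\<^esub> g = sweedler \<Delta> (\<lambda>u v. f u * g v)"
  by (simp add: Char_H_def sweedler_def fun_eq_iff)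

lemma one_Char_H: "\<one>\<^bsub>CharH\<^esub> = (\<lambda>x. scA (\<epsilon> x) 1)"
  by (simp add: Char_H_def)

lemma convolution_mem_Char_H:
  assumes f: "f \<in> carrier CharH" and g: "g \<in> carrier CharH"
  shows "f \<otimes>\<^bsub>CharH\<^esub> g \<in> carrier CharH"
proof -
  have \<beta>: "bilin_map sc scA (\<lambda>u v. f u * g v)"
    using f g by (intro lin_map_intros_A) (simp_all add: mem_Char_H_iff)
  have "sweedler \<Delta> (\<lambda>u v. f u * g v) (x * y)
      = sweedler \<Delta> (\<lambda>u v. f u * g v) x * sweedler \<Delta> (\<lambda>u v. f u * g v) y" for x y
  proof -
    have "sweedler \<Delta> (\<lambda>u v. f u * g v) (x * y)
        = sweedler \<Delta> (\<lambda>u v. sweedler \<Delta> (\<lambda>u' v'. f (u * u') * g (v * v')) y) x"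
      by (rule sweedler_mult[OF A.vector_space_axioms \<beta>])
    also have "\<dots> = sweedler \<Delta> (\<lambda>u v. f u * g v * sweedler \<Delta> (\<lambda>u' v'. f u' * g v') y) x"
      using f g by (simp add: mem_Char_H_iff sweedler_mult_left mult_ac)
    finally show ?thesis
      by (simp add: sweedler_mult_right)
  qed
  then show ?thesis
    using lin_map_sweedler[OF A.vector_space_axioms \<beta>] sweedler_one[OF A.vector_space_axioms \<beta>] f g
    by (simp add: mem_Char_H_iff mult_Char_H)
qed

lemma one_mem_Char_H: "\<one>\<^bsub>CharH\<^esub> \<in> carrier CharH"
  using lin_map_scale_left[OF A.vector_space_axioms lin_map_counit]
  by (simp add: mem_Char_H_iff one_Char_H counit_one counit_mult scaleA_one_mult)

lemma convolution_assoc: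
  assumes "f \<in> carrier CharH" "g \<in> carrier CharH" "h \<in> carrier CharH"
  shows "f \<otimes>\<^bsub>CharH\<^esub> g \<otimes>\<^bsub>CharH\<^esub> h = f \<otimes>\<^bsub>CharH\<^esub> (g \<otimes>\<^bsub>CharH\<^esub> h)"
proof -
  have \<tau>: "trilin_map sc scA (\<lambda>a b c. f a * g b * h c)"
    using assms by (intro lin_map_intros_A) (simp_all add: mem_Char_H_iff)
  have "sweedler \<Delta> (\<lambda>u v. sweedler \<Delta> (\<lambda>a b. f a * g b) u * h v) x
      = sweedler \<Delta> (\<lambda>u v. f u * sweedler \<Delta> (\<lambda>a b. g a * h b) v) x" for x
    using sweedler_coassoc[OF A.vector_space_axioms \<tau>, of x]
    by (simp add: sweedler_mult_left sweedler_mult_right mult.assoc)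
  then show ?thesis
    by (simp add: mult_Char_H fun_eq_iff)
qed

lemma one_convolution: "f \<in> carrier CharH \<Longrightarrow> \<one>\<^bsub>CharH\<^esub> \<otimes>\<^bsub>CharH\<^esub> f = f"
  using sweedler_counit_left[of scA f]
  by (simp add: mem_Char_H_iff mult_Char_H one_Char_H scaleA_one_mult fun_eq_iff)

lemma antipode_convolution:
  assumes f: "f \<in> carrier CharH"
  shows "(\<lambda>x. f (S x)) \<in> carrier CharH" and "(\<lambda>x. f (S x)) \<otimes>\<^bsub>CharH\<^esub> f = \<one>\<^bsub>CharH\<^esub>"
proof -
  have lin: "lin_map sc scA f" and mult: "f (x * y) = f x * f y" for x y
    using f by (simp_all add: mem_Char_H_iff)
  show "(\<lambda>x. f (S x)) \<in> carrier CharH"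
    using f by (simp add: mem_Char_H_iff lin_map_comp[OF lin lin_map_antipode] antipode_one
        antipode_mult mult.commute)
  have "sweedler \<Delta> (\<lambda>u v. f (S u) * f v) x = scA (\<epsilon> x) 1" for x
    using sweedler_antipode_left_lin[OF lin, of x] f by (simp add: mult mem_Char_H_iff)
  then show "(\<lambda>x. f (S x)) \<otimes>\<^bsub>CharH\<^esub> f = \<one>\<^bsub>CharH\<^esub>"
    by (simp add: mult_Char_H one_Char_H fun_eq_iff)
qed

lemma group_Char_H: "group CharH"
proof (rule groupI)
  fix f assume "f \<in> carrier CharH"
  then show "\<exists>f'\<in>carrier CharH. f' \<otimes>\<^bsub>CharH\<^esub> f = \<one>\<^bsub>CharH\<^esub>"
    using antipode_convolution by blast
qed (simp_all add: convolution_mem_Char_H one_mem_Char_H convolution_assoc one_convolution)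

lemma char_map_mult:
  assumes B: "coalgebra_hom sc \<Delta> \<epsilon> B"
    and B1: "coalgebra_hom sc \<Delta> \<epsilon> B1" and B2: "coalgebra_hom sc \<Delta> \<epsilon> B2"
    and f: "f \<in> carrier CharH" and g: "g \<in> carrier CharH"
  defines "K \<equiv> H1 \<Delta> S B1 B2"
  shows "char_map B K (f \<otimes>\<^bsub>CharH\<^esub> g)
       = char_map B K f \<otimes>\<^bsub>Char_desc sc \<Delta> \<epsilon> S B1 B2 scA\<^esub> char_map B K g"
proof -
  have lin_f: "lin_map sc scA f" and lin_g: "lin_map sc scA g"
    using f g by (simp_all add: mem_Char_H_iff)
  have \<beta>: "bilin_map sc scA (\<lambda>u v. f u * g v)"
    by (intro lin_map_intros_A lin_f lin_g)
  have \<beta>B: "bilin_map sc scA (\<lambda>u v. f (B u) * g (B v))"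
    by (intro lin_map_intros_A lin_map_comp[OF lin_f lin_map_coalgebra_hom[OF B]]
        lin_map_comp[OF lin_g lin_map_coalgebra_hom[OF B]])
  (* The convolution of Char_desc sums over an arbitrary representation of \<Delta> x by pairs
     from H_1 (chosen by SOME); coproduct_H1 shows that one exists. *)
  define rep where "rep x = (SOME xs. set xs \<subseteq> K \<times> K \<and> tensor2_eq sc (\<Delta> x) xs)" for x
  have "(\<Sum>(u, v)\<leftarrow>rep x. char_map B K f u * char_map B K g v) = sweedler \<Delta> (\<lambda>u v. f u * g v) (B x)"
    if x: "x \<in> K" for x
  proof -
    have xs: "set (rep x) \<subseteq> K \<times> K" "tensor2_eq sc (\<Delta> x) (rep x)"
      using someI_ex[OF coproduct_H1[OF B1 B2 x[unfolded K_def]]] by (simp_all add: rep_def K_def)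
    have "(\<Sum>(u, v)\<leftarrow>rep x. char_map B K f u * char_map B K g v) = (\<Sum>(u, v)\<leftarrow>rep x. f (B u) * g (B v))"
      using xs(1) by (intro arg_cong[where f=sum_list] map_cong) (auto simp: char_map_def)
    also have "\<dots> = sweedler \<Delta> (\<lambda>u v. f (B u) * g (B v)) x"
      using tensor2_eq_bilin_map[OF H.vector_space_axioms A.vector_space_axioms xs(2) \<beta>B]
      by (simp add: sweedler_def)
    also have "\<dots> = sweedler \<Delta> (\<lambda>u v. f u * g v) (B x)"
      by (rule sweedler_coalgebra_hom[OF B A.vector_space_axioms \<beta>, symmetric])
    finally show ?thesis .
  qed
  then show ?thesis
    by (auto simp: char_map_def Char_desc_def Let_def mult_Char_H rep_def K_def intro!: restrict_ext)
qed

lemma char_map_one: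
  "coalgebra_hom sc \<Delta> \<epsilon> B \<Longrightarrow> char_map B (H1 \<Delta> S B1 B2) \<one>\<^bsub>CharH\<^esub> = \<one>\<^bsub>Char_desc sc \<Delta> \<epsilon> S B1 B2 scA\<^esub>"
  by (simp add: char_map_def Char_desc_def Let_def one_Char_H counit_coalgebra_hom)

end

theorem mainTheorem12:
  fixes sc :: "'k::field_char_0 \<Rightarrow> 'h::ring_1 \<Rightarrow> 'h"
    and \<Delta> :: "'h \<Rightarrow> ('h \<times> 'h) list" and \<epsilon> :: "'h \<Rightarrow> 'k" and S B1 B2 :: "'h \<Rightarrow> 'h"
    and scA :: "'k \<Rightarrow> 'a::comm_ring_1 \<Rightarrow> 'a"
  assumes "rota_baxter_system sc \<Delta> \<epsilon> S B1 B2"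
    and "comm_algebra scA"
  defines "G \<equiv> Char_H sc \<Delta> \<epsilon> scA"
    and "G' \<equiv> Char_desc sc \<Delta> \<epsilon> S B1 B2 scA"
    and "\<B>1 \<equiv> char_map B1 (H1 \<Delta> S B1 B2)"
    and "\<B>2 \<equiv> char_map B2 (H1 \<Delta> S B1 B2)"
  shows "\<B>1 ` kernel G G' \<B>2 \<lhd> G'\<lparr>carrier := \<B>1 ` carrier G\<rparr>
         \<and> \<B>2 ` kernel G G' \<B>1 \<lhd> G'\<lparr>carrier := \<B>2 ` carrier G\<rparr>"
proof -
  have B1: "coalgebra_hom sc \<Delta> \<epsilon> B1" and B2: "coalgebra_hom sc \<Delta> \<epsilon> B2"
    and hopf: "cocomm_hopf_algebra sc \<Delta> \<epsilon> S"
    using assms(1) by (simp_all add: rota_baxter_system_def)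
  interpret hopf_characters sc \<Delta> \<epsilon> S scA
    using hopf assms(2) by unfold_locales
  have group: "group G"
    unfolding G_def by (rule group_Char_H)
  have mult1: "\<B>1 (f \<otimes>\<^bsub>G\<^esub> g) = \<B>1 f \<otimes>\<^bsub>G'\<^esub> \<B>1 g"
    and mult2: "\<B>2 (f \<otimes>\<^bsub>G\<^esub> g) = \<B>2 f \<otimes>\<^bsub>G'\<^esub> \<B>2 g"
    if "f \<in> carrier G" "g \<in> carrier G" for f g
    using that unfolding G_def G'_def \<B>1_def \<B>2_def by (simp_all add: char_map_mult B1 B2)
  have one1: "\<B>1 \<one>\<^bsub>G\<^esub> = \<one>\<^bsub>G'\<^esub>" and one2: "\<B>2 \<one>\<^bsub>G\<^esub> = \<one>\<^bsub>G'\<^esub>"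
    unfolding G_def G'_def \<B>1_def \<B>2_def by (rule char_map_one[OF B1], rule char_map_one[OF B2])
  have "\<B>1 ` kernel G G' \<B>2 \<lhd> G'\<lparr>carrier := \<B>1 ` carrier G\<rparr>"
    by (rule normal_image_of_kernel[OF group]) (fact mult1 one1 mult2 one2)+
  moreover have "\<B>2 ` kernel G G' \<B>1 \<lhd> G'\<lparr>carrier := \<B>2 ` carrier G\<rparr>"
    by (rule normal_image_of_kernel[OF group]) (fact mult1 one1 mult2 one2)+
  ultimately show ?thesis ..
qed

end
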